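(* In the setting below, suppose that the function $x\mapsto f(x)+g(Ax)$ is bounded below on $\mathbb R^n$ (equivalently, $F(x)=f(x)+g(Ax)+\Phi_{0,\lambda}(Bx-b)$ is bounded below) and that $\{x:\ x\in\operatorname{ri}(\operatorname{dom}f),\ Ax\in\operatorname{ri}(\operatorname{dom}g),\ Bx=b\}\neq\emptyset$, where "$\operatorname{ri}$" may be omitted for $f$ (resp. $g$) if $f$ (resp. $g$) is polyhedral. Then for every $\mu>0$ the problem $\inf_{w=[y;z]}\ \Xi(w)+\Psi_{0,\mu}(z)$ has a global minimizer.
   Context: Let $f:\mathbb R^n\to(-\infty,\infty]$ and $g:\mathbb R^m\to(-\infty,\infty]$ be proper, lsc and convex, with convex conjugates $f^*(q)=\sup_x\{\langle q,x\rangle-f(x)\}$, $g^*$. Let $A\in\mathbb R^{m\times n}$, $B\in\mathbb R^{r\times n}$, $b\in\mathbb R^r$, $\lambda,\mu\in\mathbb R^r$ with $\lambda,\mu>0$. $\Phi_{0,\lambda}(u)=\sum_i\lambda_i\mathbf 1_{\{u_i\neq0\}}$. For $w=[y;z]\in\mathbb R^m\times\mathbb R^r$, $\Xi(w):=f^*(-A^\top y-B^\top z)+g^*(y)+\langle b,z\rangle$. $\Psi_{0,\mu}(z)=\sum_{i=1}^r\mu_i\mathbf 1_{\{z_i\ne0\}}$. $\operatorname{ri}$ denotes relative interior. *)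

theory Defs
  imports "HOL-Analysis.Analysis"
begin

definition epigraph :: "('a::euclidean_space \<Rightarrow> ereal) \<Rightarrow> ('a \<times> real) set" where
  "epigraph f = {(x, t). f x \<le> ereal t}"

definition edom :: "('a::euclidean_space \<Rightarrow> ereal) \<Rightarrow> 'a set" where
  "edom f = {x. f x < \<infinity>}"

definition proper_fun :: "('a::euclidean_space \<Rightarrow> ereal) \<Rightarrow> bool" where
  "proper_fun f \<longleftrightarrow> (\<forall>x. f x \<noteq> -\<infinity>) \<and> (\<exists>x. f x < \<infinity>)"

definition convex_fun :: "('a::euclidean_space \<Rightarrow> ereal) \<Rightarrow> bool" where
  "convex_fun f \<longleftrightarrow> convex (epigraph f)"

definition lsc_fun :: "('a::euclidean_space \<Rightarrow> ereal) \<Rightarrow> bool" where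
  "lsc_fun f \<longleftrightarrow> (\<forall>x. f x \<le> Liminf (at x) f)"

definition polyhedral_fun :: "('a::euclidean_space \<Rightarrow> ereal) \<Rightarrow> bool" where
  "polyhedral_fun f \<longleftrightarrow> polyhedron (epigraph f)"

definition conj :: "('a::euclidean_space \<Rightarrow> ereal) \<Rightarrow> 'a \<Rightarrow> ereal" where
  "conj f q = (SUP x. ereal (q \<bullet> x) - f x)"

definition Xi :: "(real^'n \<Rightarrow> ereal) \<Rightarrow> (real^'m \<Rightarrow> ereal) \<Rightarrow> real^'n^'m \<Rightarrow> real^'n^'r
                  \<Rightarrow> real^'r \<Rightarrow> real^'m \<Rightarrow> real^'r \<Rightarrow> ereal" where
  "Xi f g A B b y z =
     conj f (- (transpose A *v y) - (transpose B *v z)) + conj g y + ereal (b \<bullet> z)"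

definition Psi0 :: "real^'r \<Rightarrow> real^'r \<Rightarrow> real" where
  "Psi0 \<mu> z = (\<Sum>i\<in>UNIV. \<mu> $ i * (if z $ i \<noteq> 0 then 1 else 0))"

end

theory Submission
  imports Defs
begin

text \<open>
  For a set \<open>S\<close> of indices let \<open>p S\<close> (\<open>restricted_value\<close> below) be the infimum of \<open>f x + g (A x)\<close> subject to \<open>(B x)\<^sub>i = b\<^sub>i\<close>
  for \<open>i \<in> S\<close>. Weak duality gives \<open>Xi y z \<ge> - p (supp z)\<close>. Conversely, the qualification condition
  provides Lagrange multipliers for every restricted problem (separation of a convex function from a
  convex set, with Farkas' lemma absorbing the polyhedral parts), and these yield a dual point \<open>(y, z)\<close>
  with \<open>supp z \<subseteq> S\<close> and \<open>Xi y z \<le> - p S\<close>. Hence \<open>Xi + Psi\<^sub>0\<close> is minimised by such a dual point for a set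
  \<open>S\<close> minimising \<open>- p S + (\<Sum>i\<in>S. \<mu>\<^sub>i)\<close> among the finitely many supports.
\<close>

section \<open>Separation, Farkas' lemma and Lagrange multipliers\<close>

lemma polyhedron_as_inequalities:
  fixes P :: "'a::euclidean_space set"
  assumes "polyhedron P"
  obtains H where "finite H" "P = {x. \<forall>(a, c)\<in>H. a \<bullet> x \<le> c}"
proof -
  obtain F where F: "finite F" "P = \<Inter>F" and half: "\<forall>h\<in>F. \<exists>a c. a \<noteq> 0 \<and> h = {x. a \<bullet> x \<le> c}"
    using assms unfolding polyhedron_def by blast
  have "\<forall>h\<in>F. \<exists>p. h = {x. fst p \<bullet> x \<le> snd p}"
    using half by (metis fst_conv snd_conv)
  then obtain p where p: "\<And>h. h \<in> F \<Longrightarrow> h = {x. fst (p h) \<bullet> x \<le> snd (p h)}"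
    by metis
  show ?thesis
  proof
    show "finite (p ` F)" using F(1) by simp
    show "P = {x. \<forall>(a, c)\<in>p ` F. a \<bullet> x \<le> c}"
      using p by (auto simp: F(2) case_prod_beta)
  qed
qed

lemma span_nonneg_on_rel_interior_0_imp_zero:
  fixes X :: "'a::euclidean_space set"
  assumes "0 \<in> rel_interior X" "l \<in> span X" "\<And>w. w \<in> X \<Longrightarrow> 0 \<le> l \<bullet> w"
  shows "l = 0"
proof (rule ccontr)
  assume "l \<noteq> 0"
  obtain e where "e > 0" and e: "ball 0 e \<inter> affine hull X \<subseteq> X"
    using assms(1) mem_rel_interior_ball by blast
  have "affine hull X = span X"
    using assms(1) rel_interior_subset by (intro affine_hull_span_0 hull_inc) blast
  then have "- (e / 2 / norm l) *\<^sub>R l \<in> X"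
    using \<open>e > 0\<close> \<open>l \<noteq> 0\<close> assms(2) by (auto simp: span_neg span_scale intro!: subsetD[OF e])
  then have "0 \<le> - (e / 2 / norm l) * (l \<bullet> l)" using assms(3) by fastforce
  moreover have "0 < e / 2 / norm l * (l \<bullet> l)" using \<open>e > 0\<close> \<open>l \<noteq> 0\<close> by simp
  ultimately show False by linarith
qed

lemma nonvertical_supporting_hyperplane:
  fixes K :: "('a::euclidean_space \<times> real) set"
  assumes "convex K" and ri: "0 \<in> rel_interior (fst ` K)"
    and above: "\<And>t. (0, t) \<in> K \<Longrightarrow> v \<le> t"
  obtains l where "\<And>w t. (w, t) \<in> K \<Longrightarrow> v \<le> t + l \<bullet> w"
proof -
  define S where "S = K + (\<lambda>s. (0, - s)) ` {..<v}"
  have S: "(w, t - s) \<in> S" if "(w, t) \<in> K" "s < v" for w t s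
    using set_plus_intro[OF that(1), of "(0, - s)"] that(2) unfolding S_def by auto
  have "convex S"
    unfolding S_def by (intro convex_set_plus \<open>convex K\<close> convex_linear_image) (auto intro: linearI)
  moreover obtain t0 where t0: "(0, t0) \<in> K"
    using ri rel_interior_subset by fastforce
  then have "S \<noteq> {}" using S[OF t0, of "v - 1"] by auto
  moreover have "0 \<notin> S"
    by (auto simp: S_def set_plus_def zero_prod_def) (meson above not_le)
  ultimately obtain a where a: "a \<in> span S" "a \<noteq> 0" "\<And>x. x \<in> S \<Longrightarrow> 0 \<le> a \<bullet> x"
    using separating_hyperplane_set_0_inspan by blast
  obtain l \<alpha> where a_eq: "a = (l, \<alpha>)" by fastforce
  have sep: "0 \<le> l \<bullet> w + \<alpha> * (t - s)" if "(w, t) \<in> K" "s < v" for w t s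
    using a(3)[OF S[OF that]] by (simp add: a_eq)
  have "0 \<le> \<alpha>"
  proof -
    define s where "s = min (v - 1) (t0 - 1)"
    have "0 \<le> \<alpha> * (t0 - s)" using sep[OF t0, of s] by (simp add: s_def)
    moreover have "0 < t0 - s" by (simp add: s_def)
    ultimately show ?thesis by (simp add: zero_le_mult_iff)
  qed
  moreover have "\<alpha> \<noteq> 0"
  proof
    assume "\<alpha> = 0"
    have "fst ` S \<subseteq> fst ` K" by (force simp: S_def set_plus_def)
    then have "l \<in> span (fst ` K)"
      using a(1) span_mono[of "fst ` S" "fst ` K"] linear_span_image[OF linear_fst, of S]
      by (force simp: a_eq)
    moreover have "0 \<le> l \<bullet> w" if "w \<in> fst ` K" for w
      using that sep[of w _ "v - 1"] \<open>\<alpha> = 0\<close> by force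
    ultimately have "l = 0" using ri by (intro span_nonneg_on_rel_interior_0_imp_zero)
    with a(2) a_eq \<open>\<alpha> = 0\<close> show False by (simp add: zero_prod_def)
  qed
  ultimately have "0 < \<alpha>" by simp
  show ?thesis
  proof
    fix w t assume wt: "(w, t) \<in> K"
    show "v \<le> t + (l /\<^sub>R \<alpha>) \<bullet> w"
    proof (rule dense_le)
      fix s assume "s < v"
      with sep[OF wt this] \<open>0 < \<alpha>\<close> show "s \<le> t + (l /\<^sub>R \<alpha>) \<bullet> w"
        by (simp add: field_simps)
    qed
  qed
qed

lemma convex_cone_hull_subset_nonneg_combinations:
  fixes a :: "'j \<Rightarrow> 'a::real_vector"
  assumes "finite J"
  shows "convex_cone hull (a ` J) \<subseteq> {(\<Sum>j\<in>J. \<theta> j *\<^sub>R a j) | \<theta>. \<forall>j\<in>J. 0 \<le> \<theta> j}"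
    (is "_ \<subseteq> ?R")
proof (rule hull_minimal)
  show "a ` J \<subseteq> ?R"
  proof
    fix x assume "x \<in> a ` J"
    then obtain i where "i \<in> J" "x = a i" by blast
    have "(\<Sum>j\<in>J. (if j = i then 1 else 0) *\<^sub>R a j) = (\<Sum>j\<in>J. if j = i then a j else 0)"
      by (intro sum.cong) auto
    also have "\<dots> = x" using \<open>finite J\<close> \<open>i \<in> J\<close> \<open>x = a i\<close> by simp
    finally show "x \<in> ?R"
      by (intro CollectI exI[of _ "\<lambda>j. if j = i then 1 else 0"]) simp
  qed
  show "convex_cone ?R"
    unfolding convex_cone_iff
  proof (intro conjI ballI allI impI)
    show "0 \<in> ?R" by (rule CollectI, rule exI[of _ "\<lambda>_. 0"]) simp
  next
    fix x y assume "x \<in> ?R" "y \<in> ?R"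
    then obtain \<theta> \<kappa> where "\<forall>j\<in>J. 0 \<le> \<theta> j" "\<forall>j\<in>J. 0 \<le> \<kappa> j"
      "x = (\<Sum>j\<in>J. \<theta> j *\<^sub>R a j)" "y = (\<Sum>j\<in>J. \<kappa> j *\<^sub>R a j)"
      by blast
    then show "x + y \<in> ?R"
      by (intro CollectI exI[of _ "\<lambda>j. \<theta> j + \<kappa> j"]) (simp add: scaleR_add_left sum.distrib)
  next
    fix x and t :: real assume "x \<in> ?R" "0 \<le> t"
    then obtain \<theta> where "\<forall>j\<in>J. 0 \<le> \<theta> j" "x = (\<Sum>j\<in>J. \<theta> j *\<^sub>R a j)" by blast
    with \<open>0 \<le> t\<close> show "t *\<^sub>R x \<in> ?R"
      by (intro CollectI exI[of _ "\<lambda>j. t * \<theta> j"]) (simp add: scaleR_sum_right)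
  qed
qed

lemma farkas_homogeneous:
  fixes a :: "'j \<Rightarrow> 'a::euclidean_space"
  assumes "finite J" and impl: "\<And>z. \<forall>j\<in>J. 0 \<le> a j \<bullet> z \<Longrightarrow> 0 \<le> \<nu> \<bullet> z"
  obtains \<theta> where "\<forall>j\<in>J. 0 \<le> \<theta> j" "\<nu> = (\<Sum>j\<in>J. \<theta> j *\<^sub>R a j)"
proof -
  define C where "C = convex_cone hull (a ` J)"
  have "\<nu> \<in> C"
  proof (rule ccontr)
    assume "\<nu> \<notin> C"
    moreover have "closed C" "convex C"
      unfolding C_def using \<open>finite J\<close> by (simp_all add: closed_convex_cone_hull convex_convex_cone_hull)
    ultimately obtain q b where qb: "q \<bullet> \<nu> < b" "\<forall>x\<in>C. b < q \<bullet> x"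
      using separating_hyperplane_closed_point by blast
    have "0 \<in> C" unfolding C_def by (rule convex_cone_hull_contains_0)
    with qb(2) have "b < q \<bullet> 0" by blast
    then have "b < 0" by simp
    have "0 \<le> q \<bullet> x" if "x \<in> C" for x
    proof (rule ccontr)
      assume "\<not> 0 \<le> q \<bullet> x"
      then have "(b / (q \<bullet> x)) *\<^sub>R x \<in> C"
        using \<open>b < 0\<close> that unfolding C_def
        by (intro convex_cone_hull_mul) (auto simp: divide_nonpos_neg)
      with qb(2) have "b < q \<bullet> ((b / (q \<bullet> x)) *\<^sub>R x)" by blast
      with \<open>\<not> 0 \<le> q \<bullet> x\<close> show False by simp
    qed
    then have "\<forall>j\<in>J. 0 \<le> a j \<bullet> q"
      unfolding C_def by (metis hull_inc imageI inner_commute)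
    with impl have "0 \<le> \<nu> \<bullet> q" by blast
    with qb \<open>b < 0\<close> show False by (simp add: inner_commute)
  qed
  then show ?thesis
    using that convex_cone_hull_subset_nonneg_combinations[OF \<open>finite J\<close>, of a] unfolding C_def by blast
qed

lemma homogenised_implication:
  fixes a :: "'j \<Rightarrow> 'a::euclidean_space"
  assumes feasible: "\<forall>j\<in>J. a j \<bullet> z0 \<le> c j"
    and impl: "\<And>z. \<forall>j\<in>J. a j \<bullet> z \<le> c j \<Longrightarrow> \<nu> \<bullet> z \<le> \<beta>"
    and hom: "0 \<le> s" "\<forall>j\<in>J. a j \<bullet> z \<le> c j * s"
  shows "\<nu> \<bullet> z \<le> \<beta> * s"
proof (cases "s = 0")
  case True
  (* z is a recession direction of the feasible set, so \<nu> \<bullet> z > 0 would make \<nu> unbounded on it *)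
  have ray: "\<nu> \<bullet> z0 + t * (\<nu> \<bullet> z) \<le> \<beta>" if "0 \<le> t" for t
  proof -
    have "a j \<bullet> (z0 + t *\<^sub>R z) \<le> c j" if "j \<in> J" for j
    proof -
      have "t * (a j \<bullet> z) \<le> 0"
        using hom(2) that True \<open>0 \<le> t\<close> by (simp add: mult_nonneg_nonpos)
      moreover have "a j \<bullet> z0 \<le> c j" using feasible that by blast
      ultimately show ?thesis by (simp add: inner_add_right)
    qed
    then show ?thesis using impl[of "z0 + t *\<^sub>R z"] by (simp add: inner_add_right)
  qed
  have "\<nu> \<bullet> z \<le> 0"
  proof (rule ccontr)
    assume "\<not> \<nu> \<bullet> z \<le> 0"
    define t where "t = (\<bar>\<beta> - \<nu> \<bullet> z0\<bar> + 1) / (\<nu> \<bullet> z)"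
    have "0 \<le> t" "t * (\<nu> \<bullet> z) = \<bar>\<beta> - \<nu> \<bullet> z0\<bar> + 1"
      using \<open>\<not> \<nu> \<bullet> z \<le> 0\<close> by (simp_all add: t_def)
    with ray[of t] show False by linarith
  qed
  with True show ?thesis by simp
next
  case False
  with hom(1) have "0 < s" by simp
  have "\<forall>j\<in>J. a j \<bullet> (z /\<^sub>R s) \<le> c j"
    using hom(2) \<open>0 < s\<close> by (simp add: pos_divide_le_eq[symmetric] divide_inverse_commute)
  then have "\<nu> \<bullet> (z /\<^sub>R s) \<le> \<beta>" by (rule impl)
  have "\<nu> \<bullet> z = s * (\<nu> \<bullet> (z /\<^sub>R s))" using \<open>0 < s\<close> by simp
  also have "\<dots> \<le> s * \<beta>" using \<open>\<nu> \<bullet> (z /\<^sub>R s) \<le> \<beta>\<close> \<open>0 < s\<close> by simp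
  finally show ?thesis by (simp add: mult.commute)
qed

lemma farkas_inhomogeneous:
  fixes a :: "'j \<Rightarrow> 'a::euclidean_space"
  assumes "finite J" and feasible: "\<forall>j\<in>J. a j \<bullet> z0 \<le> c j"
    and impl: "\<And>z. \<forall>j\<in>J. a j \<bullet> z \<le> c j \<Longrightarrow> \<nu> \<bullet> z \<le> \<beta>"
  obtains \<theta> where "\<forall>j\<in>J. 0 \<le> \<theta> j" "\<nu> = (\<Sum>j\<in>J. \<theta> j *\<^sub>R a j)" "(\<Sum>j\<in>J. \<theta> j * c j) \<le> \<beta>"
proof -
  define a' where "a' = (\<lambda>j. case j of None \<Rightarrow> (0, 1) | Some j \<Rightarrow> (- a j, c j))"
  have hom: "0 \<le> (- \<nu>, \<beta>) \<bullet> p" if "\<forall>j\<in>insert None (Some ` J). 0 \<le> a' j \<bullet> p" for p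
  proof -
    obtain z s where p: "p = (z, s)" by fastforce
    have "0 \<le> s" "\<forall>j\<in>J. a j \<bullet> z \<le> c j * s"
      using that by (auto simp: a'_def p)
    then show ?thesis
      using homogenised_implication[OF feasible impl] by (simp add: p)
  qed
  obtain \<kappa> where \<kappa>: "\<forall>j\<in>insert None (Some ` J). 0 \<le> \<kappa> j"
    and eq: "(- \<nu>, \<beta>) = (\<Sum>j\<in>insert None (Some ` J). \<kappa> j *\<^sub>R a' j)"
    using farkas_homogeneous[of "insert None (Some ` J)" a' "(- \<nu>, \<beta>)", OF _ hom] \<open>finite J\<close>
    by blast
  have sum_Some: "(\<Sum>j\<in>insert None (Some ` J). h j) = h None + (\<Sum>j\<in>J. h (Some j))"
    for h :: "'j option \<Rightarrow> 'a \<times> real"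
    using \<open>finite J\<close> by (simp add: sum.reindex)
  have "\<nu> = (\<Sum>j\<in>J. \<kappa> (Some j) *\<^sub>R a j)" "\<beta> = \<kappa> None + (\<Sum>j\<in>J. \<kappa> (Some j) * c j)"
    using arg_cong[OF eq, of fst] arg_cong[OF eq, of snd]
    by (simp_all add: sum_Some a'_def fst_sum snd_sum sum_negf)
  with \<kappa> show ?thesis by (intro that[of "\<kappa> \<circ> Some"]) auto
qed

lemma rel_interior_Int_rel_interior_subset:
  fixes P D :: "'a::euclidean_space set"
  assumes "convex P" "convex D" "P \<subseteq> affine hull D"
  shows "rel_interior (P \<inter> rel_interior D) \<subseteq> rel_interior P"
proof (cases "P \<inter> rel_interior D = {}")
  case False
  then obtain x1 where x1: "x1 \<in> P" "x1 \<in> rel_interior D" by blast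
  then obtain e where "e > 0" and e: "ball x1 e \<inter> affine hull D \<subseteq> rel_interior D"
    using mem_rel_interior_ball[of x1 "rel_interior D"]
    by (auto simp: rel_interior_rel_interior rel_interior_same_affine_hull \<open>convex D\<close>)
  have "y \<in> affine hull (P \<inter> rel_interior D)" if "y \<in> P" for y
  proof (cases "y = x1")
    case False
    define \<delta> where "\<delta> = min 1 (e / (2 * norm (y - x1)))"
    have "0 < \<delta>" "\<delta> \<le> 1" using \<open>e > 0\<close> False by (auto simp: \<delta>_def)
    define y' where "y' = x1 + \<delta> *\<^sub>R (y - x1)"
    have "y' = (1 - \<delta>) *\<^sub>R x1 + \<delta> *\<^sub>R y" by (simp add: y'_def algebra_simps)
    then have "y' \<in> P" using \<open>convex P\<close> x1(1) that \<open>0 < \<delta>\<close> \<open>\<delta> \<le> 1\<close> by (simp add: convex_alt)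
    moreover have "dist x1 y' < e"
    proof -
      have "dist x1 y' = \<delta> * norm (y - x1)" using \<open>0 < \<delta>\<close> by (simp add: y'_def dist_norm)
      also have "\<dots> \<le> e / 2" using False \<open>e > 0\<close> by (simp add: \<delta>_def min_def field_simps)
      finally show ?thesis using \<open>e > 0\<close> by linarith
    qed
    ultimately have "y' \<in> P \<inter> rel_interior D" using e assms(3) by auto
    moreover have "y = (1 - 1 / \<delta>) *\<^sub>R x1 + (1 / \<delta>) *\<^sub>R y'"
      using \<open>0 < \<delta>\<close> by (simp add: y'_def algebra_simps)
    ultimately show ?thesis using x1
      by (metis IntI affine_affine_hull diff_add_cancel hull_inc mem_affine)
  qed (use x1 in \<open>simp add: hull_inc\<close>)
  then have "affine hull (P \<inter> rel_interior D) = affine hull P"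
    by (metis Int_lower1 hull_hull hull_mono subsetI subset_antisym)
  then show ?thesis by (intro subset_rel_interior) auto
qed simp


lemma rel_interior_Int_rel_interior_nonempty:
  fixes P D :: "'a::euclidean_space set"
  assumes "convex P" "convex D" "P \<subseteq> affine hull D" "P \<inter> rel_interior D \<noteq> {}"
  obtains x where "x \<in> rel_interior P" "x \<in> rel_interior D"
proof -
  have "convex (P \<inter> rel_interior D)" using assms(1,2) by (simp add: convex_Int convex_rel_interior)
  then obtain x where "x \<in> rel_interior (P \<inter> rel_interior D)"
    using assms(4) rel_interior_eq_empty by blast
  then show ?thesis
    using that rel_interior_Int_rel_interior_subset[OF assms(1-3)] rel_interior_subset by blast
qed

lemma convex_on_separation_from_convex_set:
  fixes D P :: "'a::euclidean_space set" and F :: "'a \<Rightarrow> real"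
  assumes "convex D" "convex_on D F" "convex P"
    and x1: "x1 \<in> rel_interior D" "x1 \<in> rel_interior P"
    and bound: "\<And>x. x \<in> D \<Longrightarrow> x \<in> P \<Longrightarrow> v \<le> F x"
  obtains \<nu> \<beta> where "\<And>z. z \<in> P \<Longrightarrow> \<nu> \<bullet> z \<le> \<beta>" "\<And>x. x \<in> D \<Longrightarrow> v + \<beta> \<le> F x + \<nu> \<bullet> x"
proof -
  (* K is the epigraph of F over D - P: its fibre over 0 lies above v, and ri (fst ` K) = ri D - ri P contains 0 *)
  define K where "K = Convex.epigraph D F + (\<lambda>z. (- z, 0)) ` P"
  have K: "(x - z, t) \<in> K" if "x \<in> D" "F x \<le> t" "z \<in> P" for x z t
    using set_plus_intro[of "(x, t)" "Convex.epigraph D F" "(- z, 0)"] that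
    by (auto simp: K_def mem_epigraph)
  have "convex K"
    unfolding K_def using assms(2,3)
    by (intro convex_set_plus convex_linear_image) (auto simp: convex_epigraph intro: linearI)
  moreover have "fst ` K = D + uminus ` P"
    by (force simp: K_def set_plus_def Convex.epigraph_def)
  then have "rel_interior (fst ` K) = rel_interior D + uminus ` rel_interior P"
    using rel_interior_sum[OF \<open>convex D\<close> convex_negations[OF \<open>convex P\<close>]]
      rel_interior_injective_linear_image[of uminus P]
    by (simp add: bounded_linear_minus[OF bounded_linear_ident] inj_on_def)
  then have "0 \<in> rel_interior (fst ` K)"
    using set_plus_intro[OF x1(1) imageI[OF x1(2), of uminus]] by simp
  moreover have "v \<le> t" if "(0, t) \<in> K" for t
    using that bound by (force simp: K_def set_plus_def Convex.epigraph_def)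
  ultimately obtain l where l: "\<And>w t. (w, t) \<in> K \<Longrightarrow> v \<le> t + l \<bullet> w"
    using nonvertical_supporting_hyperplane by blast
  have sep: "l \<bullet> z \<le> F x + l \<bullet> x - v" if "x \<in> D" "z \<in> P" for x z
    using l[OF K[OF that(1) order_refl that(2)]] by (simp add: inner_diff_right)
  define \<beta> where "\<beta> = (SUP z\<in>P. l \<bullet> z)"
  have "x1 \<in> D" "x1 \<in> P" using x1 rel_interior_subset by blast+
  then have "bdd_above ((\<bullet>) l ` P)" using sep[OF \<open>x1 \<in> D\<close>] by (meson bdd_aboveI2)
  show ?thesis
  proof
    show "l \<bullet> z \<le> \<beta>" if "z \<in> P" for z
      using that \<open>bdd_above _\<close> by (simp add: \<beta>_def cSUP_upper)
    show "v + \<beta> \<le> F x + l \<bullet> x" if "x \<in> D" for x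
    proof -
      have "\<beta> \<le> F x + l \<bullet> x - v"
        unfolding \<beta>_def using \<open>x1 \<in> P\<close> sep[OF that] by (intro cSUP_least) auto
      then show ?thesis by linarith
    qed
  qed
qed

lemma ball_Plus_iff: "(\<forall>j\<in>A <+> B. P j) \<longleftrightarrow> (\<forall>a\<in>A. P (Inl a)) \<and> (\<forall>b\<in>B. P (Inr b))"
  by auto

lemma lagrange_multipliers_inequalities:
  fixes D :: "'a::euclidean_space set" and F :: "'a \<Rightarrow> real" and a :: "'i \<Rightarrow> 'a"
  assumes "convex D" "convex_on D F" "finite I"
    and x0: "x0 \<in> rel_interior D" "\<forall>i\<in>I. a i \<bullet> x0 \<le> c i"
    and bound: "\<And>x. x \<in> D \<Longrightarrow> \<forall>i\<in>I. a i \<bullet> x \<le> c i \<Longrightarrow> v \<le> F x"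
  obtains \<theta> where "\<forall>i\<in>I. 0 \<le> \<theta> i" "\<And>x. x \<in> D \<Longrightarrow> v \<le> F x + (\<Sum>i\<in>I. \<theta> i * (a i \<bullet> x - c i))"
proof -
  (* Cutting the constraint set down to affine hull D makes the Slater point x0 yield a common point of
     ri D and of its relative interior; Farkas then expands the separating functional in the constraint normals. *)
  obtain H where "finite H" and H: "affine hull D = {x. \<forall>(b, d)\<in>H. b \<bullet> x \<le> d}"
    using polyhedron_as_inequalities[OF affine_imp_polyhedron[OF affine_affine_hull]] by blast
  define a' :: "'i + 'a \<times> real \<Rightarrow> 'a" where "a' = case_sum a fst"
  define c' :: "'i + 'a \<times> real \<Rightarrow> real" where "c' = case_sum c snd"
  define P where "P = {x. \<forall>j\<in>I <+> H. a' j \<bullet> x \<le> c' j}"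
  have P: "P = {x. \<forall>i\<in>I. a i \<bullet> x \<le> c i} \<inter> affine hull D"
    by (auto simp: P_def H a'_def c'_def ball_Plus_iff)
  have "convex P"
    unfolding P Collect_ball_eq
    by (intro convex_Int convex_INT convex_halfspace_le affine_imp_convex affine_affine_hull)
  have "x0 \<in> P" using x0 rel_interior_subset hull_subset by (force simp: P)
  moreover have "P \<subseteq> affine hull D" by (simp add: P)
  ultimately obtain x1 where "x1 \<in> rel_interior P" "x1 \<in> rel_interior D"
    using rel_interior_Int_rel_interior_nonempty[OF \<open>convex P\<close> \<open>convex D\<close>] x0(1) by blast
  moreover have "v \<le> F x" if "x \<in> D" "x \<in> P" for x using bound that by (simp add: P)
  ultimately obtain \<nu> \<beta> where \<nu>: "\<And>z. z \<in> P \<Longrightarrow> \<nu> \<bullet> z \<le> \<beta>"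
    and \<beta>: "\<And>x. x \<in> D \<Longrightarrow> v + \<beta> \<le> F x + \<nu> \<bullet> x"
    using convex_on_separation_from_convex_set[OF \<open>convex D\<close> \<open>convex_on D F\<close> \<open>convex P\<close>] by metis
  obtain \<kappa> where \<kappa>: "\<forall>j\<in>I <+> H. 0 \<le> \<kappa> j" "\<nu> = (\<Sum>j\<in>I <+> H. \<kappa> j *\<^sub>R a' j)"
      "(\<Sum>j\<in>I <+> H. \<kappa> j * c' j) \<le> \<beta>"
    using farkas_inhomogeneous[of "I <+> H" a' x0 c' \<nu> \<beta>] \<open>finite I\<close> \<open>finite H\<close> \<open>x0 \<in> P\<close> \<nu>
    by (auto simp: P_def)
  show ?thesis
  proof
    show "\<forall>i\<in>I. 0 \<le> \<kappa> (Inl i)" using \<kappa>(1) by auto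
    fix x assume "x \<in> D"
    have "(\<Sum>h\<in>H. \<kappa> (Inr h) * (fst h \<bullet> x - snd h)) \<le> 0"
      using \<kappa>(1) \<open>x \<in> D\<close> hull_subset[of D affine] H
      by (intro sum_nonpos mult_nonneg_nonpos) (auto simp: case_prod_beta)
    moreover have "\<nu> \<bullet> x - (\<Sum>j\<in>I <+> H. \<kappa> j * c' j) =
        (\<Sum>i\<in>I. \<kappa> (Inl i) * (a i \<bullet> x - c i)) + (\<Sum>h\<in>H. \<kappa> (Inr h) * (fst h \<bullet> x - snd h))"
      using \<open>finite I\<close> \<open>finite H\<close>
      by (simp add: \<kappa>(2) sum.Plus a'_def c'_def inner_add_left inner_sum_left
          right_diff_distrib sum_subtractf)
    ultimately have "\<nu> \<bullet> x - (\<Sum>j\<in>I <+> H. \<kappa> j * c' j) \<le> (\<Sum>i\<in>I. \<kappa> (Inl i) * (a i \<bullet> x - c i))"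
      by linarith
    with \<beta>[OF \<open>x \<in> D\<close>] \<kappa>(3) show "v \<le> F x + (\<Sum>i\<in>I. \<kappa> (Inl i) * (a i \<bullet> x - c i))"
      by linarith
  qed
qed

lemma lagrange_multipliers:
  fixes D :: "'a::euclidean_space set" and F :: "'a \<Rightarrow> real" and a :: "'i \<Rightarrow> 'a"
    and L :: "'a \<Rightarrow> 'e::euclidean_space"
  assumes "convex D" "convex_on D F" "finite I" "linear L"
    and x0: "x0 \<in> rel_interior D" "\<forall>i\<in>I. a i \<bullet> x0 \<le> c i" "L x0 = d"
    and bound: "\<And>x. x \<in> D \<Longrightarrow> \<forall>i\<in>I. a i \<bullet> x \<le> c i \<Longrightarrow> L x = d \<Longrightarrow> v \<le> F x"
  obtains \<theta> w where "\<forall>i\<in>I. 0 \<le> \<theta> i"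
    "\<And>x. x \<in> D \<Longrightarrow> v \<le> F x + (\<Sum>i\<in>I. \<theta> i * (a i \<bullet> x - c i)) + w \<bullet> (L x - d)"
proof -
  (* L x = d is imposed as the inequalities adjoint L j \<bullet> x \<le> d \<bullet> j for j \<in> Basis \<union> -Basis. *)
  define J where "J = Basis \<union> uminus ` (Basis :: 'e set)"
  define a' where "a' = case_sum a (adjoint L)"
  define c' where "c' = case_sum c ((\<bullet>) d)"
  have "finite J" by (simp add: J_def)
  have adjoint_inner: "adjoint L j \<bullet> x - d \<bullet> j = (L x - d) \<bullet> j" for j x
    using adjoint_works[OF \<open>linear L\<close>, of x j] by (simp add: inner_commute[of "adjoint L j"] inner_diff_left)
  then have adjoint_le: "adjoint L j \<bullet> x \<le> d \<bullet> j \<longleftrightarrow> (L x - d) \<bullet> j \<le> 0" for j x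
    by (metis diff_le_0_iff_le)
  have "L x = d" if "\<forall>j\<in>J. (L x - d) \<bullet> j \<le> 0" for x
  proof -
    have "(L x - d) \<bullet> b = 0" if "b \<in> Basis" for b
    proof -
      have "b \<in> J" "- b \<in> J" using that by (auto simp: J_def)
      then have "(L x - d) \<bullet> b \<le> 0" "(L x - d) \<bullet> (- b) \<le> 0"
        using \<open>\<forall>j\<in>J. _\<close> by blast+
      then show ?thesis by simp
    qed
    then show ?thesis using euclidean_eq_iff[of "L x" d] by (simp add: inner_diff_left)
  qed
  then have "v \<le> F x" if "x \<in> D" "\<forall>j\<in>I <+> J. a' j \<bullet> x \<le> c' j" for x
    using bound that by (simp add: a'_def c'_def adjoint_le ball_Plus_iff)
  moreover have "\<forall>j\<in>I <+> J. a' j \<bullet> x0 \<le> c' j"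
    using x0(2,3) by (simp add: a'_def c'_def adjoint_le ball_Plus_iff)
  ultimately obtain \<kappa> where \<kappa>: "\<forall>j\<in>I <+> J. 0 \<le> \<kappa> j"
    and le: "\<And>x. x \<in> D \<Longrightarrow> v \<le> F x + (\<Sum>j\<in>I <+> J. \<kappa> j * (a' j \<bullet> x - c' j))"
    using lagrange_multipliers_inequalities[OF \<open>convex D\<close> \<open>convex_on D F\<close>
        finite_Plus[OF \<open>finite I\<close> \<open>finite J\<close>] x0(1)]
    by blast
  show ?thesis
  proof
    show "\<forall>i\<in>I. 0 \<le> \<kappa> (Inl i)" using \<kappa> by auto
    fix x assume "x \<in> D"
    have "(\<Sum>j\<in>J. \<kappa> (Inr j) * (adjoint L j \<bullet> x - d \<bullet> j)) = (\<Sum>j\<in>J. \<kappa> (Inr j) *\<^sub>R j) \<bullet> (L x - d)"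
      by (subst inner_commute) (simp add: adjoint_inner inner_sum_right)
    with le[OF \<open>x \<in> D\<close>] \<open>finite I\<close> \<open>finite J\<close>
    show "v \<le> F x + (\<Sum>i\<in>I. \<kappa> (Inl i) * (a i \<bullet> x - c i)) + (\<Sum>j\<in>J. \<kappa> (Inr j) *\<^sub>R j) \<bullet> (L x - d)"
      by (simp add: sum.Plus a'_def c'_def add.assoc)
  qed
qed


section \<open>Proper convex extended-real functions\<close>

lemma proper_fun_finite:
  assumes "proper_fun f" "x \<in> edom f"
  shows "f x = ereal (real_of_ereal (f x))"
  using assms by (cases "f x") (auto simp: proper_fun_def edom_def)

lemma edom_eq_fst_epigraph: "edom f = fst ` epigraph f"
proof
  show "edom f \<subseteq> fst ` epigraph f"
  proof
    fix x assume "x \<in> edom f"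
    then have "(x, real_of_ereal (f x)) \<in> epigraph f"
      by (cases "f x") (auto simp: edom_def epigraph_def)
    then show "x \<in> fst ` epigraph f" by force
  qed
qed (auto simp: edom_def epigraph_def intro: le_less_trans)

lemma convex_edom: "convex_fun f \<Longrightarrow> convex (edom f)"
  unfolding edom_eq_fst_epigraph convex_fun_def by (rule convex_linear_image) (rule linear_fst)

lemma convex_on_real_of_ereal:
  assumes "proper_fun f" "convex_fun f"
  shows "convex_on (edom f) (\<lambda>x. real_of_ereal (f x))"
proof (rule convex_onI)
  show "convex (edom f)" using assms(2) by (rule convex_edom)
  fix t :: real and x y assume t: "0 < t" "t < 1" and "x \<in> edom f" "y \<in> edom f"
  define z where "z = (1 - t) *\<^sub>R x + t *\<^sub>R y"
  have "(x, real_of_ereal (f x)) \<in> epigraph f" "(y, real_of_ereal (f y)) \<in> epigraph f"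
    using proper_fun_finite[OF assms(1)] \<open>x \<in> edom f\<close> \<open>y \<in> edom f\<close> by (auto simp: epigraph_def)
  then have "(1 - t) *\<^sub>R (x, real_of_ereal (f x)) + t *\<^sub>R (y, real_of_ereal (f y)) \<in> epigraph f"
    using assms(2) t unfolding convex_fun_def convex_alt by (meson less_eq_real_def)
  then have le: "f z \<le> ereal ((1 - t) * real_of_ereal (f x) + t * real_of_ereal (f y))"
    by (simp add: epigraph_def z_def)
  then have "z \<in> edom f" by (auto simp: edom_def intro: le_less_trans)
  with le proper_fun_finite[OF assms(1)]
  show "real_of_ereal (f z) \<le> (1 - t) * real_of_ereal (f x) + t * real_of_ereal (f y)"
    by (metis ereal_less_eq(3))
qed

lemma convex_on_compose_linear:
  assumes "convex_on S f" "linear h"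
  shows "convex_on (h -` S) (\<lambda>x. f (h x))"
proof (rule convex_onI)
  show "convex (h -` S)"
    using assms convex_linear_vimage convex_on_imp_convex by blast
  fix t :: real and x y assume "0 < t" "t < 1" "x \<in> h -` S" "y \<in> h -` S"
  then show "f (h ((1 - t) *\<^sub>R x + t *\<^sub>R y)) \<le> (1 - t) * f (h x) + t * f (h y)"
    using convex_onD[OF assms(1), of t "h x" "h y"] by (simp add: linear_add linear_scale assms(2))
qed

text \<open>For polyhedral \<open>f\<close> the epigraph enters as finitely many linear inequalities, so any point of
  \<open>edom f\<close> is a Slater point; otherwise \<open>f\<close> itself is the objective on \<open>edom f \<times> UNIV\<close> and the
  Slater point has to lie in its relative interior.\<close>

lemma epigraphical_reformulation:
  fixes f :: "'a::euclidean_space \<Rightarrow> ereal"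
  assumes "proper_fun f" "convex_fun f"
    and x0: "if polyhedral_fun f then x0 \<in> edom f else x0 \<in> rel_interior (edom f)"
  obtains D \<phi> H where "convex D" "convex_on D \<phi>" "finite H"
    "(x0, real_of_ereal (f x0)) \<in> rel_interior D"
    "\<And>x. x \<in> edom f \<Longrightarrow> (x, real_of_ereal (f x)) \<in> D"
    "\<And>x. x \<in> edom f \<Longrightarrow> \<phi> (x, real_of_ereal (f x)) = real_of_ereal (f x)"
    "\<And>x. x \<in> edom f \<Longrightarrow> \<forall>(a, c)\<in>H. a \<bullet> (x, real_of_ereal (f x)) \<le> c"
    "\<And>p. p \<in> D \<Longrightarrow> \<forall>(a, c)\<in>H. a \<bullet> p \<le> c \<Longrightarrow> f (fst p) \<le> ereal (\<phi> p)"
proof (cases "polyhedral_fun f")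
  case True
  then obtain H where "finite H" and H: "epigraph f = {p. \<forall>(a, c)\<in>H. a \<bullet> p \<le> c}"
    unfolding polyhedral_fun_def by (rule polyhedron_as_inequalities)
  show ?thesis
  proof (rule that[of UNIV snd H])
    show "convex_on UNIV (snd :: 'a \<times> real \<Rightarrow> real)"
      using convex_on_compose_linear[of UNIV "\<lambda>t. t" snd] by (simp add: convex_on_ident linear_snd)
    show "\<forall>(a, c)\<in>H. a \<bullet> (x, real_of_ereal (f x)) \<le> c" if "x \<in> edom f" for x
      using proper_fun_finite[OF assms(1) that] H by (auto simp: epigraph_def)
    show "f (fst p) \<le> ereal (snd p)" if "\<forall>(a, c)\<in>H. a \<bullet> p \<le> c" for p
    proof -
      have "p \<in> epigraph f" using that H by simp
      then show ?thesis by (cases p) (simp add: epigraph_def)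
    qed
  qed (auto simp: \<open>finite H\<close>)
next
  case False
  let ?\<phi> = "\<lambda>p. real_of_ereal (f (fst p))"
  show ?thesis
  proof (rule that[of "edom f \<times> (UNIV :: real set)" ?\<phi> "{}"])
    show "convex_on (edom f \<times> UNIV) ?\<phi>"
      using convex_on_compose_linear[OF convex_on_real_of_ereal[OF assms(1,2)] linear_fst]
      by (simp add: vimage_fst)
    show "(x0, real_of_ereal (f x0)) \<in> rel_interior (edom f \<times> UNIV)"
    proof -
      have "rel_interior (edom f \<times> (UNIV :: real set)) = rel_interior (edom f) \<times> UNIV"
        by (simp add: rel_interior_Times convex_edom assms(2))
      then show ?thesis using x0 False by simp
    qed
    show "f (fst p) \<le> ereal (?\<phi> p)" if "p \<in> edom f \<times> UNIV" for p :: "'a \<times> real"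
      using that proper_fun_finite[OF assms(1)] by force
  qed (auto simp: convex_edom[OF assms(2)] convex_Times)
qed


section \<open>Duality for the restricted problems\<close>

lemma ereal_minus_proper_fun:
  assumes "proper_fun f"
  shows "ereal r - f x = (if x \<in> edom f then ereal (r - real_of_ereal (f x)) else - \<infinity>)"
  using assms by (cases "f x") (auto simp: proper_fun_def edom_def)

lemma inner_dual_argument:
  fixes A :: "real^'n^'m" and C :: "real^'n^'k"
  shows "(- (transpose A *v y) - (transpose C *v z)) \<bullet> x = - (y \<bullet> (A *v x)) - z \<bullet> (C *v x)"
  by (simp add: inner_diff_left dot_lmul_matrix)

lemma weak_duality:
  fixes f :: "real^'n \<Rightarrow> ereal" and g :: "real^'m \<Rightarrow> ereal"
    and A :: "real^'n^'m" and C :: "real^'n^'k" and e :: "real^'k"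
  assumes "proper_fun f" "proper_fun g"
  shows "- (INF x\<in>{x. C *v x = e}. f x + g (A *v x)) \<le> Xi f g A C e y z"
proof -
  define q where "q = - (transpose A *v y) - (transpose C *v z)"
  have "- Xi f g A C e y z \<le> f x + g (A *v x)" if "C *v x = e" for x
  proof (cases "x \<in> edom f \<and> A *v x \<in> edom g")
    case True
    have "q \<bullet> x + y \<bullet> (A *v x) + e \<bullet> z = 0"
      using that unfolding q_def inner_dual_argument by (simp add: inner_commute)
    moreover obtain r s where rs: "f x = ereal r" "g (A *v x) = ereal s"
      using True proper_fun_finite[OF assms(1)] proper_fun_finite[OF assms(2)] by blast
    ultimately have "- (f x + g (A *v x)) = (ereal (q \<bullet> x) - f x) + (ereal (y \<bullet> (A *v x)) - g (A *v x)) + ereal (e \<bullet> z)"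
      by simp
    also have "\<dots> \<le> Xi f g A C e y z"
      unfolding Xi_def conj_def q_def[symmetric] by (intro add_mono SUP_upper order_refl) auto
    finally show ?thesis by (simp add: ereal_uminus_le_reorder)
  next
    case False
    then have "f x + g (A *v x) = \<infinity>"
      using assms by (auto simp: edom_def proper_fun_def)
    then show ?thesis by (metis ereal_less_eq(1))
  qed
  then show ?thesis by (subst ereal_uminus_le_reorder) (auto intro: INF_greatest)
qed

lemma Xi_le_if_lagrangian_bounded:
  fixes f :: "real^'n \<Rightarrow> ereal" and g :: "real^'m \<Rightarrow> ereal"
    and A :: "real^'n^'m" and C :: "real^'n^'k" and e :: "real^'k"
  assumes "proper_fun f" "proper_fun g"
    and bound: "\<And>x u. x \<in> edom f \<Longrightarrow> u \<in> edom g \<Longrightarrow>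
      v \<le> real_of_ereal (f x) + real_of_ereal (g u) + y \<bullet> (A *v x - u) + z \<bullet> (C *v x - e)"
  shows "Xi f g A C e y z \<le> ereal (- v)"
proof -
  define q where "q = - (transpose A *v y) - (transpose C *v z)"
  define M where "M = - v - e \<bullet> z"
  have conj_terms_le: "q \<bullet> x - real_of_ereal (f x) \<le> M - (y \<bullet> u - real_of_ereal (g u))"
    if "x \<in> edom f" "u \<in> edom g" for x u
    using bound[OF that] unfolding q_def inner_dual_argument
    by (simp add: M_def inner_diff_right inner_commute)
  have conj_f: "conj f q \<le> ereal (M - (y \<bullet> u - real_of_ereal (g u)))" if "u \<in> edom g" for u
    unfolding conj_def using conj_terms_le[OF _ that]
    by (intro SUP_least) (simp add: ereal_minus_proper_fun[OF assms(1)])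
  obtain x1 u1 where "x1 \<in> edom f" "u1 \<in> edom g"
    using assms(1,2) by (auto simp: proper_fun_def edom_def)
  have "ereal (q \<bullet> x1) - f x1 \<le> conj f q" unfolding conj_def by (rule SUP_upper) simp
  with conj_f[OF \<open>u1 \<in> edom g\<close>] \<open>x1 \<in> edom f\<close> obtain r where r: "conj f q = ereal r"
    by (cases "conj f q") (auto simp: ereal_minus_proper_fun[OF assms(1)])
  have "y \<bullet> u - real_of_ereal (g u) \<le> M - r" if "u \<in> edom g" for u
    using conj_f[OF that] r by simp
  then have "conj g y \<le> ereal (M - r)"
    unfolding conj_def by (intro SUP_least) (simp add: ereal_minus_proper_fun[OF assms(2)])
  then have "Xi f g A C e y z \<le> ereal r + ereal (M - r) + ereal (e \<bullet> z)"
    unfolding Xi_def q_def[symmetric] r by (intro add_mono order_refl)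
  then show ?thesis by (simp add: M_def)
qed

lemma epigraphical_reformulation_pair:
  fixes f :: "'a::euclidean_space \<Rightarrow> ereal" and g :: "'b::euclidean_space \<Rightarrow> ereal"
  assumes f: "proper_fun f" "convex_fun f" and g: "proper_fun g" "convex_fun g"
    and x0: "if polyhedral_fun f then x0 \<in> edom f else x0 \<in> rel_interior (edom f)"
    and u0: "if polyhedral_fun g then u0 \<in> edom g else u0 \<in> rel_interior (edom g)"
  obtains D F H where "convex D" "convex_on D F" "finite H"
    "((x0, real_of_ereal (f x0)), (u0, real_of_ereal (g u0))) \<in> rel_interior D"
    "\<And>x u. x \<in> edom f \<Longrightarrow> u \<in> edom g \<Longrightarrow> ((x, real_of_ereal (f x)), (u, real_of_ereal (g u))) \<in> D"
    "\<And>x u. x \<in> edom f \<Longrightarrow> u \<in> edom g \<Longrightarrow>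
      F ((x, real_of_ereal (f x)), (u, real_of_ereal (g u))) = real_of_ereal (f x) + real_of_ereal (g u)"
    "\<And>x u. x \<in> edom f \<Longrightarrow> u \<in> edom g \<Longrightarrow>
      \<forall>h\<in>H. fst h \<bullet> ((x, real_of_ereal (f x)), (u, real_of_ereal (g u))) \<le> snd h"
    "\<And>q. q \<in> D \<Longrightarrow> \<forall>h\<in>H. fst h \<bullet> q \<le> snd h \<Longrightarrow> f (fst (fst q)) + g (fst (snd q)) \<le> ereal (F q)"
proof -
  obtain Df \<phi>f Hf where Df: "convex Df" "convex_on Df \<phi>f" "finite Hf"
      "(x0, real_of_ereal (f x0)) \<in> rel_interior Df"
      "\<And>x. x \<in> edom f \<Longrightarrow> (x, real_of_ereal (f x)) \<in> Df"
      "\<And>x. x \<in> edom f \<Longrightarrow> \<phi>f (x, real_of_ereal (f x)) = real_of_ereal (f x)"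
      "\<And>x. x \<in> edom f \<Longrightarrow> \<forall>(a, c)\<in>Hf. a \<bullet> (x, real_of_ereal (f x)) \<le> c"
      "\<And>p. p \<in> Df \<Longrightarrow> \<forall>(a, c)\<in>Hf. a \<bullet> p \<le> c \<Longrightarrow> f (fst p) \<le> ereal (\<phi>f p)"
    using epigraphical_reformulation[OF f x0] by blast
  obtain Dg \<phi>g Hg where Dg: "convex Dg" "convex_on Dg \<phi>g" "finite Hg"
      "(u0, real_of_ereal (g u0)) \<in> rel_interior Dg"
      "\<And>u. u \<in> edom g \<Longrightarrow> (u, real_of_ereal (g u)) \<in> Dg"
      "\<And>u. u \<in> edom g \<Longrightarrow> \<phi>g (u, real_of_ereal (g u)) = real_of_ereal (g u)"
      "\<And>u. u \<in> edom g \<Longrightarrow> \<forall>(a, c)\<in>Hg. a \<bullet> (u, real_of_ereal (g u)) \<le> c"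
      "\<And>p. p \<in> Dg \<Longrightarrow> \<forall>(a, c)\<in>Hg. a \<bullet> p \<le> c \<Longrightarrow> g (fst p) \<le> ereal (\<phi>g p)"
    using epigraphical_reformulation[OF g u0] by blast
  define F where "F q = \<phi>f (fst q) + \<phi>g (snd q)" for q
  define H where "H = (\<lambda>(a, c). ((a, 0), c)) ` Hf \<union> (\<lambda>(a, c). ((0, a), c)) ` Hg"
  have H: "(\<forall>h\<in>H. fst h \<bullet> q \<le> snd h) \<longleftrightarrow>
      (\<forall>(a, c)\<in>Hf. a \<bullet> fst q \<le> c) \<and> (\<forall>(a, c)\<in>Hg. a \<bullet> snd q \<le> c)" for q
    by (cases q) (simp add: H_def ball_Un Ball_image_comp case_prod_beta o_def)
  have "convex_on (Df \<times> Dg) (\<lambda>q. \<phi>f (fst q))" "convex_on (Df \<times> Dg) (\<lambda>q. \<phi>g (snd q))"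
    by (rule convex_on_subset[OF convex_on_compose_linear[OF Df(2) linear_fst]]
        convex_on_subset[OF convex_on_compose_linear[OF Dg(2) linear_snd]];
        auto simp: convex_Times Df(1) Dg(1))+
  then have conv: "convex_on (Df \<times> Dg) F"
    unfolding F_def by (rule convex_on_add)
  have fin: "finite H" using Df(3) Dg(3) by (simp add: H_def)
  show ?thesis
  proof (rule that[of "Df \<times> Dg" F H])
    show "f (fst (fst q)) + g (fst (snd q)) \<le> ereal (F q)"
      if "q \<in> Df \<times> Dg" "\<forall>h\<in>H. fst h \<bullet> q \<le> snd h" for q
    proof -
      have "f (fst (fst q)) \<le> ereal (\<phi>f (fst q))" "g (fst (snd q)) \<le> ereal (\<phi>g (snd q))"
        using that Df(8)[of "fst q"] Dg(8)[of "snd q"] by (auto simp: H)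
      from add_mono[OF this] show ?thesis by (simp add: F_def)
    qed
  qed (simp_all add: conv fin convex_Times rel_interior_Times Df Dg H F_def)
qed

lemma lagrangian_bound_from_primal_bound:
  fixes f :: "real^'n \<Rightarrow> ereal" and g :: "real^'m \<Rightarrow> ereal"
    and A :: "real^'n^'m" and C :: "real^'n^'k" and e :: "real^'k"
  assumes f: "proper_fun f" "convex_fun f" and g: "proper_fun g" "convex_fun g"
    and x0f: "if polyhedral_fun f then x0 \<in> edom f else x0 \<in> rel_interior (edom f)"
    and x0g: "if polyhedral_fun g then A *v x0 \<in> edom g else A *v x0 \<in> rel_interior (edom g)"
    and "C *v x0 = e"
    and primal: "\<And>x. C *v x = e \<Longrightarrow> ereal v \<le> f x + g (A *v x)"
  obtains y z where "\<And>x u. x \<in> edom f \<Longrightarrow> u \<in> edom g \<Longrightarrow>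
    v \<le> real_of_ereal (f x) + real_of_ereal (g u) + y \<bullet> (A *v x - u) + z \<bullet> (C *v x - e)"
proof -
  obtain D F H where D: "convex D" "convex_on D F" "finite H"
    "((x0, real_of_ereal (f x0)), (A *v x0, real_of_ereal (g (A *v x0)))) \<in> rel_interior D"
    "\<And>x u. x \<in> edom f \<Longrightarrow> u \<in> edom g \<Longrightarrow> ((x, real_of_ereal (f x)), (u, real_of_ereal (g u))) \<in> D"
    "\<And>x u. x \<in> edom f \<Longrightarrow> u \<in> edom g \<Longrightarrow>
      F ((x, real_of_ereal (f x)), (u, real_of_ereal (g u))) = real_of_ereal (f x) + real_of_ereal (g u)"
    "\<And>x u. x \<in> edom f \<Longrightarrow> u \<in> edom g \<Longrightarrow>
      \<forall>h\<in>H. fst h \<bullet> ((x, real_of_ereal (f x)), (u, real_of_ereal (g u))) \<le> snd h"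
    "\<And>q. q \<in> D \<Longrightarrow> \<forall>h\<in>H. fst h \<bullet> q \<le> snd h \<Longrightarrow> f (fst (fst q)) + g (fst (snd q)) \<le> ereal (F q)"
    using epigraphical_reformulation_pair[OF f g x0f x0g] by blast
  define L :: "((real^'n) \<times> real) \<times> ((real^'m) \<times> real) \<Rightarrow> (real^'m) \<times> (real^'k)"
    where "L q = (A *v fst (fst q) - fst (snd q), C *v fst (fst q))" for q
  have "linear L"
    unfolding L_def by (intro linearI) (auto simp: algebra_simps)
  have "x0 \<in> edom f" "A *v x0 \<in> edom g"
    using x0f x0g rel_interior_subset by (auto split: if_splits)
  then have q0: "\<forall>h\<in>H. fst h \<bullet> ((x0, real_of_ereal (f x0)), (A *v x0, real_of_ereal (g (A *v x0)))) \<le> snd h"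
    "L ((x0, real_of_ereal (f x0)), (A *v x0, real_of_ereal (g (A *v x0)))) = (0, e)"
    using D(7) \<open>C *v x0 = e\<close> by (simp_all add: L_def)
  have bound: "v \<le> F q" if "q \<in> D" "\<forall>h\<in>H. fst h \<bullet> q \<le> snd h" "L q = (0, e)" for q
  proof -
    have "fst (snd q) = A *v fst (fst q)" "C *v fst (fst q) = e" using that(3) by (auto simp: L_def)
    then have "ereal v \<le> f (fst (fst q)) + g (fst (snd q))" using primal by simp
    also have "\<dots> \<le> ereal (F q)" using D(8) that(1,2) .
    finally show ?thesis by simp
  qed
  obtain \<theta> w where \<theta>: "\<forall>h\<in>H. 0 \<le> \<theta> h"
    and lagr: "\<And>q. q \<in> D \<Longrightarrow> v \<le> F q + (\<Sum>h\<in>H. \<theta> h * (fst h \<bullet> q - snd h)) + w \<bullet> (L q - (0, e))"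
    using lagrange_multipliers[OF D(1-3) \<open>linear L\<close> D(4) q0 bound] by blast
  show ?thesis
  proof (rule that[of "fst w" "snd w"])
    fix x u assume xu: "x \<in> edom f" "u \<in> edom g"
    define q where "q = ((x, real_of_ereal (f x)), (u, real_of_ereal (g u)))"
    have "(\<Sum>h\<in>H. \<theta> h * (fst h \<bullet> q - snd h)) \<le> 0"
      using \<theta> D(7)[OF xu] by (intro sum_nonpos mult_nonneg_nonpos) (auto simp: q_def)
    moreover have "w \<bullet> (L q - (0, e)) = fst w \<bullet> (A *v x - u) + snd w \<bullet> (C *v x - e)"
      by (cases w) (simp add: L_def q_def)
    ultimately show "v \<le> real_of_ereal (f x) + real_of_ereal (g u) + fst w \<bullet> (A *v x - u) + snd w \<bullet> (C *v x - e)"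
      using lagr[of q] D(5,6)[OF xu] by (simp add: q_def)
  qed
qed

lemma dual_attainment:
  fixes f :: "real^'n \<Rightarrow> ereal" and g :: "real^'m \<Rightarrow> ereal"
    and A :: "real^'n^'m" and C :: "real^'n^'k" and e :: "real^'k"
  assumes f: "proper_fun f" "convex_fun f" and g: "proper_fun g" "convex_fun g"
    and x0f: "if polyhedral_fun f then x0 \<in> edom f else x0 \<in> rel_interior (edom f)"
    and x0g: "if polyhedral_fun g then A *v x0 \<in> edom g else A *v x0 \<in> rel_interior (edom g)"
    and "C *v x0 = e"
  obtains y z where "Xi f g A C e y z \<le> - (INF x\<in>{x. C *v x = e}. f x + g (A *v x))"
proof (cases "(INF x\<in>{x. C *v x = e}. f x + g (A *v x)) = - \<infinity>")
  case True
  then show ?thesis using that[of 0 0] by simp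
next
  case False
  have "x0 \<in> edom f" "A *v x0 \<in> edom g"
    using x0f x0g rel_interior_subset by (auto split: if_splits)
  then have "f x0 + g (A *v x0) < \<infinity>" by (auto simp: edom_def)
  moreover have "(INF x\<in>{x. C *v x = e}. f x + g (A *v x)) \<le> f x0 + g (A *v x0)"
    using \<open>C *v x0 = e\<close> by (intro INF_lower) simp
  ultimately obtain v where v: "(INF x\<in>{x. C *v x = e}. f x + g (A *v x)) = ereal v"
    using False by (cases "INF x\<in>{x. C *v x = e}. f x + g (A *v x)") auto
  then have "ereal v \<le> f x + g (A *v x)" if "C *v x = e" for x
    using that by (metis (mono_tags, lifting) INF_lower mem_Collect_eq)
  then obtain y z where "\<And>x u. x \<in> edom f \<Longrightarrow> u \<in> edom g \<Longrightarrow>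
      v \<le> real_of_ereal (f x) + real_of_ereal (g u) + y \<bullet> (A *v x - u) + z \<bullet> (C *v x - e)"
    using lagrangian_bound_from_primal_bound[OF f g x0f x0g \<open>C *v x0 = e\<close>] by blast
  then have "Xi f g A C e y z \<le> ereal (- v)"
    by (rule Xi_le_if_lagrangian_bounded[OF f(1) g(1)])
  with v show ?thesis using that by simp
qed

definition coord_proj :: "'r set \<Rightarrow> real^'r^'r" where
  "coord_proj S = (\<chi> i j. if i = j \<and> i \<in> S then 1 else 0)"

lemma coord_proj_mult_vec: "coord_proj S *v v = (\<chi> i. if i \<in> S then v $ i else 0)"
proof -
  have "(\<Sum>j\<in>UNIV. (if i = j \<and> i \<in> S then 1 else 0) * v $ j) = (if i \<in> S then v $ i else 0)" for i
    by (simp add: if_distrib[of "\<lambda>t. t * _"] cong: if_cong)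
  then show ?thesis by (simp add: coord_proj_def matrix_vector_mult_def vec_eq_iff)
qed

lemma transpose_coord_proj [simp]: "transpose (coord_proj S) = coord_proj S"
  unfolding coord_proj_def transpose_def by (rule vec_eq_iff[THEN iffD2]) auto

lemma Xi_matrix_mult:
  fixes P :: "real^'r^'k"
  shows "Xi f g A (P ** B) (P *v b) y z = Xi f g A B b y (transpose P *v z)"
  by (simp add: Xi_def matrix_transpose_mul matrix_vector_mul_assoc[symmetric] dot_lmul_matrix[symmetric]
      inner_commute)

lemma Psi0_eq_sum_support: "Psi0 \<mu> z = (\<Sum>i\<in>{i. z $ i \<noteq> 0}. \<mu> $ i)"
  unfolding Psi0_def by (simp add: sum.inter_filter[symmetric] if_distrib cong: if_cong)

lemma Psi0_coord_proj_le:
  assumes "\<forall>i. 0 \<le> \<mu> $ i"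
  shows "Psi0 \<mu> (coord_proj S *v z) \<le> (\<Sum>i\<in>S. \<mu> $ i)"
proof -
  have "Psi0 \<mu> (coord_proj S *v z) \<le> (\<Sum>i\<in>UNIV. if i \<in> S then \<mu> $ i else 0)"
    unfolding Psi0_def using assms by (intro sum_mono) (simp add: coord_proj_mult_vec)
  also have "\<dots> = (\<Sum>i\<in>S. \<mu> $ i)" by (simp add: sum.inter_filter[symmetric])
  finally show ?thesis .
qed

definition restricted_value ::
    "(real^'n \<Rightarrow> ereal) \<Rightarrow> (real^'m \<Rightarrow> ereal) \<Rightarrow> real^'n^'m \<Rightarrow> real^'n^'r \<Rightarrow> real^'r \<Rightarrow> 'r set \<Rightarrow> ereal"
  where "restricted_value f g A B b S =
    (INF x\<in>{x. (coord_proj S ** B) *v x = coord_proj S *v b}. f x + g (A *v x))"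

lemma restricted_weak_duality:
  assumes "proper_fun f" "proper_fun g"
  shows "- restricted_value f g A B b {i. z $ i \<noteq> 0} \<le> Xi f g A B b y z"
proof -
  have "coord_proj {i. z $ i \<noteq> 0} *v z = z" by (simp add: coord_proj_mult_vec vec_eq_iff)
  then show ?thesis
    using weak_duality[OF assms, where C = "coord_proj {i. z $ i \<noteq> 0} ** B"
        and e = "coord_proj {i. z $ i \<noteq> 0} *v b" and A = A and y = y and z = z]
    by (simp add: restricted_value_def Xi_matrix_mult)
qed

lemma restricted_dual_attainment:
  fixes f :: "real^'n \<Rightarrow> ereal" and g :: "real^'m \<Rightarrow> ereal"
    and A :: "real^'n^'m" and B :: "real^'n^'r" and b :: "real^'r"
  assumes "proper_fun f" "convex_fun f" "proper_fun g" "convex_fun g"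
    and "if polyhedral_fun f then x0 \<in> edom f else x0 \<in> rel_interior (edom f)"
    and "if polyhedral_fun g then A *v x0 \<in> edom g else A *v x0 \<in> rel_interior (edom g)"
    and "B *v x0 = b"
  obtains y z where "Xi f g A B b y (coord_proj S *v z) \<le> - restricted_value f g A B b S"
proof -
  have "(coord_proj S ** B) *v x0 = coord_proj S *v b"
    using \<open>B *v x0 = b\<close> by (simp add: matrix_vector_mul_assoc[symmetric])
  then obtain y z where "Xi f g A (coord_proj S ** B) (coord_proj S *v b) y z \<le> - restricted_value f g A B b S"
    using dual_attainment[OF assms(1-6)] unfolding restricted_value_def by blast
  then show ?thesis using that by (simp add: Xi_matrix_mult)
qed

theorem mainTheorem7:
  fixes f :: "real^'n \<Rightarrow> ereal" and g :: "real^'m \<Rightarrow> ereal"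
    and A :: "real^'n^'m" and B :: "real^'n^'r" and b :: "real^'r"
  assumes f: "proper_fun f" "lsc_fun f" "convex_fun f"
    and g: "proper_fun g" "lsc_fun g" "convex_fun g"
    and bdd: "\<exists>c::real. \<forall>x. ereal c \<le> f x + g (A *v x)"
    and feas: "\<exists>x. (if polyhedral_fun f then x \<in> edom f else x \<in> rel_interior (edom f))
                 \<and> (if polyhedral_fun g then A *v x \<in> edom g else A *v x \<in> rel_interior (edom g))
                 \<and> B *v x = b"
  shows "\<forall>\<mu>::real^'r. (\<forall>i. \<mu> $ i > 0) \<longrightarrow>
           (\<exists>y z. \<forall>y' z'. Xi f g A B b y z + ereal (Psi0 \<mu> z)
                        \<le> Xi f g A B b y' z' + ereal (Psi0 \<mu> z'))"
proof (intro allI impI)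
  fix \<mu> :: "real^'r" assume "\<forall>i. \<mu> $ i > 0"
  obtain x0 where "if polyhedral_fun f then x0 \<in> edom f else x0 \<in> rel_interior (edom f)"
    "if polyhedral_fun g then A *v x0 \<in> edom g else A *v x0 \<in> rel_interior (edom g)" "B *v x0 = b"
    using feas by blast
  note attain = restricted_dual_attainment[OF f(1,3) g(1,3) this]
  define \<phi> where "\<phi> S = - restricted_value f g A B b S + ereal (\<Sum>i\<in>S. \<mu> $ i)" for S
  define Sm where "Sm = arg_min_on \<phi> UNIV"
  obtain y z where yz: "Xi f g A B b y (coord_proj Sm *v z) \<le> - restricted_value f g A B b Sm"
    using attain by blast
  show "\<exists>y z. \<forall>y' z'. Xi f g A B b y z + ereal (Psi0 \<mu> z) \<le> Xi f g A B b y' z' + ereal (Psi0 \<mu> z')"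
  proof (intro exI allI)
    fix y' :: "real^'m" and z' :: "real^'r"
    have "Xi f g A B b y (coord_proj Sm *v z) + ereal (Psi0 \<mu> (coord_proj Sm *v z)) \<le> \<phi> Sm"
      unfolding \<phi>_def using yz Psi0_coord_proj_le[of \<mu> Sm z] \<open>\<forall>i. \<mu> $ i > 0\<close>
      by (intro add_mono) (auto simp: less_imp_le)
    also have "\<dots> \<le> \<phi> {i. z' $ i \<noteq> 0}"
      unfolding Sm_def by (rule arg_min_least) auto
    also have "\<dots> \<le> Xi f g A B b y' z' + ereal (Psi0 \<mu> z')"
      unfolding \<phi>_def Psi0_eq_sum_support using restricted_weak_duality[OF f(1) g(1)]
      by (intro add_mono) auto
    finally show "Xi f g A B b y (coord_proj Sm *v z) + ereal (Psi0 \<mu> (coord_proj Sm *v z))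
        \<le> Xi f g A B b y' z' + ereal (Psi0 \<mu> z')" .
  qed
qed

end
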